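(* Let $n\ge 2$ and let $MAP_n^{2n-3}B$ be the set of $\lceil \log_2 n\rceil$ variables $move\text{-}L_1^{2^j-2}\text{-}L_1^{2^j-1}(2^j-1)$ for $j=1,\dots,\lceil\log_2 n\rceil$, where $L_1^0$ denotes $L^0$ (i.e. $move\text{-}L^0\text{-}L_1^1$ at step 1, $move\text{-}L_1^2\text{-}L_1^3$ at step 3, $move\text{-}L_1^6\text{-}L_1^7$ at step 7, $move\text{-}L_1^{14}\text{-}L_1^{15}$ at step 15, ...). Then $MAP_n^{2n-3}B$ is a backdoor for the CNF formula $MAP_n^{2n-3}$.
   Context: MAP planning domain. Fix $n\ge 2$. The map is an undirected graph with $3n-3$ nodes: a centre $L^0$; a path (branch 1) $L^0 - L_1^1 - \dots - L_1^{2n-3}$; and, for each $i=2,\dots,n$, a single node $L_i^1$ adjacent to $L^0$. Facts are $at\text{-}x$ and $visited\text{-}x$. For every edge $\{x,y\}$ and both orientations there is an action $move\text{-}x\text{-}y$ with precondition $\{at\text{-}x\}$, add effects $\{at\text{-}y, visited\text{-}y\}$, delete effect $\{at\text{-}x\}$. The initial state is $\{at\text{-}L^0\}$. The goal of $MAP_n^{2n-3}$ is $\{visited\text{-}L_1^{2n-3}, visited\text{-}L_2^1\}$. The CNF formula $MAP_n^{2n-3}$ is the standard Graphplan-based (Blackbox-style) SAT encoding of this task with $T=2n-2$ time steps (unsatisfiable, since a shortest plan has $2n-1$ steps). Build the Graphplan planning graph from the initial state, with a NOOP action $NOOP\text{-}p$ (precondition and add effect $\{p\}$) for each fact $p$.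 For each $t=1,\dots,T$ there is a variable $a(t)$ for every action $a$ (including NOOPs) in action layer $t$. Clauses: goal clauses $\{a(T): g\in add(a)\}$ for each goal $g$; precondition clauses $\{\neg a(t)\}\cup\{a'(t-1): p\in add(a')\}$ for each $a(t)$, $t\ge 2$, $p\in pre(a)$; mutex clauses $\{\neg a(t),\neg a'(t)\}$ for pairs of actions Graphplan marks mutually exclusive at layer $t$ (interference or competing needs); in particular any two move actions at the same step are mutually exclusive. For an unsatisfiable CNF $F$, a set $B$ of variables is a backdoor (with respect to unit propagation) if for every truth assignment to the variables in $B$, unit propagation on $F$ under that assignment derives the empty clause. *)

theory Defs
  imports Complex_Main
begin

record ('f, 'a) strips =
  acts :: "'a set"            \<comment> \<open>all actions, including the NOOPs\<close>
  pre  :: "'a \<Rightarrow> 'f set"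
  add  :: "'a \<Rightarrow> 'f set"
  del  :: "'a \<Rightarrow> 'f set"
  init :: "'f set"
  goal :: "'f set"

definition gp_acts :: "('f, 'a) strips \<Rightarrow> 'f set \<Rightarrow> ('f \<times> 'f) set \<Rightarrow> 'a set" where
  "gp_acts P F FM = {a \<in> acts P. pre P a \<subseteq> F \<and>
       (\<forall>p \<in> pre P a. \<forall>q \<in> pre P a. (p, q) \<notin> FM)}"

definition interfere :: "('f, 'a) strips \<Rightarrow> 'a \<Rightarrow> 'a \<Rightarrow> bool" where
  "interfere P a b \<longleftrightarrow>
     del P a \<inter> (pre P b \<union> add P b) \<noteq> {} \<or> del P b \<inter> (pre P a \<union> add P a) \<noteq> {}"

definition gp_act_mutex :: "('f, 'a) strips \<Rightarrow> 'f set \<Rightarrow> ('f \<times> 'f) set \<Rightarrow> ('a \<times> 'a) set" where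
  "gp_act_mutex P F FM = {(a, b). a \<in> gp_acts P F FM \<and> b \<in> gp_acts P F FM \<and> a \<noteq> b \<and>
       (interfere P a b \<or> (\<exists>p \<in> pre P a. \<exists>q \<in> pre P b. (p, q) \<in> FM))}"

fun gp_facts :: "('f, 'a) strips \<Rightarrow> nat \<Rightarrow> 'f set \<times> ('f \<times> 'f) set" where
  "gp_facts P 0 = (init P, {})"
| "gp_facts P (Suc t) =
     (let F = fst (gp_facts P t); FM = snd (gp_facts P t);
          A = gp_acts P F FM; AM = gp_act_mutex P F FM;
          F' = (\<Union>a \<in> A. add P a)
      in (F', {(p, q). p \<in> F' \<and> q \<in> F' \<and> p \<noteq> q \<and>
                 (\<forall>a \<in> A. \<forall>b \<in> A. p \<in> add P a \<and> q \<in> add P b \<longrightarrow> (a, b) \<in> AM)}))"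

text \<open>Action layer t (for t \<ge> 1) and its mutex relation.\<close>
definition gp_layer :: "('f, 'a) strips \<Rightarrow> nat \<Rightarrow> 'a set" where
  "gp_layer P t = gp_acts P (fst (gp_facts P (t - 1))) (snd (gp_facts P (t - 1)))"

definition gp_mutex :: "('f, 'a) strips \<Rightarrow> nat \<Rightarrow> ('a \<times> 'a) set" where
  "gp_mutex P t = gp_act_mutex P (fst (gp_facts P (t - 1))) (snd (gp_facts P (t - 1)))"

type_synonym 'v lit = "'v \<times> bool"   \<comment> \<open>(v, True) = v, (v, False) = not v\<close>

definition neg :: "'v lit \<Rightarrow> 'v lit" where
  "neg l = (fst l, \<not> snd l)"

inductive_set up_lits :: "'v lit set set \<Rightarrow> 'v lit set \<Rightarrow> 'v lit set"
  for F :: "'v lit set set" and S0 :: "'v lit set" where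
  base: "l \<in> S0 \<Longrightarrow> l \<in> up_lits F S0"
| unit: "C \<in> F \<Longrightarrow> l \<in> C \<Longrightarrow> (\<forall>m \<in> C - {l}. neg m \<in> up_lits F S0) \<Longrightarrow> l \<in> up_lits F S0"

definition up_conflict :: "'v lit set set \<Rightarrow> 'v lit set \<Rightarrow> bool" where
  "up_conflict F S0 \<longleftrightarrow> (\<exists>C \<in> F. \<forall>m \<in> C. neg m \<in> up_lits F S0)"

definition backdoor :: "'v lit set set \<Rightarrow> 'v set \<Rightarrow> bool" where
  "backdoor F B \<longleftrightarrow> (\<forall>\<alpha> :: 'v \<Rightarrow> bool. up_conflict F {(v, \<alpha> v) | v. v \<in> B})"

definition gp_cnf :: "('f, 'a) strips \<Rightarrow> nat \<Rightarrow> ('a \<times> nat) lit set set" where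
  "gp_cnf P T =
     {{((a, T), True) | a. a \<in> gp_layer P T \<and> g \<in> add P a} | g. g \<in> goal P}
   \<union> {insert ((a, t), False) {((a', t - 1), True) | a'. a' \<in> gp_layer P (t - 1) \<and> p \<in> add P a'}
       | a t p. 2 \<le> t \<and> t \<le> T \<and> a \<in> gp_layer P t \<and> p \<in> pre P a}
   \<union> {{((a, t), False), ((b, t), False)} | a b t. 1 \<le> t \<and> t \<le> T \<and> (a, b) \<in> gp_mutex P t}"

text \<open>L0 is the centre; Br i k is L_i^k.\<close>
datatype node = L0 | Br nat nat

datatype fact = At node | Visited node

datatype act = Move node node | Noop fact

definition map_nodes :: "nat \<Rightarrow> node set" where
  "map_nodes n = {L0} \<union> {Br 1 k | k. 1 \<le> k \<and> k \<le> 2 * n - 3} \<union> {Br i 1 | i. 2 \<le> i \<and> i \<le> n}"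

text \<open>Undirected edges, as a symmetric set of ordered pairs.\<close>
definition map_edges0 :: "nat \<Rightarrow> (node \<times> node) set" where
  "map_edges0 n = {(L0, Br 1 1)} \<union> {(Br 1 k, Br 1 (k + 1)) | k. 1 \<le> k \<and> k < 2 * n - 3}
                  \<union> {(L0, Br i 1) | i. 2 \<le> i \<and> i \<le> n}"

definition map_edges :: "nat \<Rightarrow> (node \<times> node) set" where
  "map_edges n = map_edges0 n \<union> {(y, x) | x y. (x, y) \<in> map_edges0 n}"

definition map_facts :: "nat \<Rightarrow> fact set" where
  "map_facts n = At ` map_nodes n \<union> Visited ` map_nodes n"

fun map_pre :: "act \<Rightarrow> fact set" where
  "map_pre (Move x y) = {At x}"
| "map_pre (Noop p) = {p}"

fun map_add :: "act \<Rightarrow> fact set" where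
  "map_add (Move x y) = {At y, Visited y}"
| "map_add (Noop p) = {p}"

fun map_del :: "act \<Rightarrow> fact set" where
  "map_del (Move x y) = {At x}"
| "map_del (Noop p) = {}"

definition map_task :: "nat \<Rightarrow> (fact, act) strips" where
  "map_task n = \<lparr> acts = {Move x y | x y. (x, y) \<in> map_edges n} \<union> Noop ` map_facts n,
                  pre = map_pre, add = map_add, del = map_del,
                  init = {At L0},
                  goal = {Visited (Br 1 (2 * n - 3)), Visited (Br 2 1)} \<rparr>"

text \<open>The CNF formula MAP_n^{2n-3} with T = 2n-2 time steps.\<close>
definition map_cnf :: "nat \<Rightarrow> (act \<times> nat) lit set set" where
  "map_cnf n = gp_cnf (map_task n) (2 * n - 2)"

definition branch1 :: "nat \<Rightarrow> node" where
  "branch1 k = (if k = 0 then L0 else Br 1 k)"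

definition mapB :: "nat \<Rightarrow> (act \<times> nat) set" where
  "mapB n = {(Move (branch1 (2 ^ j - 2)) (branch1 (2 ^ j - 1)), 2 ^ j - 1)
             | j::nat. 1 \<le> j \<and> j \<le> nat \<lceil>log 2 (real n)\<rceil>}"

end

(*
  Put s = 2^m - 1 with m = ceil (log 2 n), so that
  s <= 2n - 3 and 2n - 2 <= 2s, and let x be the move L_1^(s-1) -> L_1^s at step s. In the
  planning graph, At and Visited of L_1^k first appear in layer k, where the move along branch
  1 is their only supporter, and any two actions that need an At fact are mutex.

  If x is false, unit propagation through the precondition clauses falsifies every later move
  along branch 1 up to step 2n - 3, so the goal Visited L_1^(2n-3) forces the last move at
  step 2n - 2. That move is mutex with both supporters of Visited L_2^1: with the move L^0 ->
  L_2^1 because both need an At fact, and with the NOOP keeping the visit because having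
  visited L_2^1 at step 2n - 3 is mutex with standing at L_1^(2n-4).

  If x is true, propagation backwards makes the whole walk to L_1^s true, and its mutexes
  falsify, at every step s + d, the arrival at any node farther than d from L_1^s. As L^0 is
  at distance s and 2n - 2 <= 2s, the move L^0 -> L_2^1 is false at every step, hence so is
  every NOOP keeping Visited L_2^1, and the goal clause of Visited L_2^1 is falsified.
*)

theory Submission
  imports Defs
begin

section \<open>Unit propagation on Graphplan encodings\<close>

lemma up_lits_unitI:
  assumes "C \<in> F" "l \<in> C" "\<And>m. m \<in> C \<Longrightarrow> m \<noteq> l \<Longrightarrow> neg m \<in> up_lits F S"
  shows "l \<in> up_lits F S"
  using assms by (intro up_lits.unit) auto

lemma up_conflictI:
  assumes "C \<in> F" "\<And>m. m \<in> C \<Longrightarrow> neg m \<in> up_lits F S"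
  shows "up_conflict F S"
  using assms unfolding up_conflict_def by blast

abbreviation gp_fact_layer :: "('f, 'a) strips \<Rightarrow> nat \<Rightarrow> 'f set" where
  "gp_fact_layer P t \<equiv> fst (gp_facts P t)"

abbreviation gp_fact_mutex :: "('f, 'a) strips \<Rightarrow> nat \<Rightarrow> ('f \<times> 'f) set" where
  "gp_fact_mutex P t \<equiv> snd (gp_facts P t)"

lemma gp_fact_mutex_irrefl: "(p, p) \<notin> gp_fact_mutex P t"
  by (cases t) (auto simp: Let_def)

lemma gp_fact_layer_Suc_iff:
  "p \<in> gp_fact_layer P (Suc t) \<longleftrightarrow> (\<exists>a \<in> gp_layer P (Suc t). p \<in> add P a)"
  by (simp add: Let_def gp_layer_def)

lemma gp_fact_mutex_Suc_iff:
  "(p, q) \<in> gp_fact_mutex P (Suc t) \<longleftrightarrow>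
     p \<in> gp_fact_layer P (Suc t) \<and> q \<in> gp_fact_layer P (Suc t) \<and> p \<noteq> q \<and>
     (\<forall>a \<in> gp_layer P (Suc t). \<forall>b \<in> gp_layer P (Suc t).
        p \<in> add P a \<longrightarrow> q \<in> add P b \<longrightarrow> (a, b) \<in> gp_mutex P (Suc t))"
  by (auto simp: Let_def gp_layer_def gp_mutex_def)

declare gp_facts.simps(2) [simp del]

lemma gp_layer_single_pre_iff:
  "pre P a = {p} \<Longrightarrow> a \<in> gp_layer P t \<longleftrightarrow> a \<in> acts P \<and> p \<in> gp_fact_layer P (t - 1)"
  by (auto simp: gp_layer_def gp_acts_def gp_fact_mutex_irrefl)

lemma gp_mutexI_interfere:
  "a \<in> gp_layer P t \<Longrightarrow> b \<in> gp_layer P t \<Longrightarrow> a \<noteq> b \<Longrightarrow> interfere P a b \<Longrightarrow> (a, b) \<in> gp_mutex P t"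
  by (simp add: gp_layer_def gp_mutex_def gp_act_mutex_def)

lemma gp_mutexI_competing:
  "a \<in> gp_layer P t \<Longrightarrow> b \<in> gp_layer P t \<Longrightarrow> a \<noteq> b \<Longrightarrow> p \<in> pre P a \<Longrightarrow> q \<in> pre P b \<Longrightarrow>
   (p, q) \<in> gp_fact_mutex P (t - 1) \<Longrightarrow> (a, b) \<in> gp_mutex P t"
  unfolding gp_layer_def gp_mutex_def gp_act_mutex_def by blast

lemma gp_up_neg_by_pre:
  assumes "2 \<le> t" "t \<le> T" "a \<in> gp_layer P t" "p \<in> pre P a"
    and "\<And>b. b \<in> gp_layer P (t - 1) \<Longrightarrow> p \<in> add P b \<Longrightarrow> ((b, t - 1), False) \<in> up_lits (gp_cnf P T) S"
  shows "((a, t), False) \<in> up_lits (gp_cnf P T) S"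
proof (rule up_lits_unitI)
  show "insert ((a, t), False) {((b, t - 1), True) | b. b \<in> gp_layer P (t - 1) \<and> p \<in> add P b}
          \<in> gp_cnf P T"
    using assms(1-4) unfolding gp_cnf_def by blast
qed (use assms(5) in \<open>auto simp: neg_def\<close>)

lemma gp_up_pos_by_pre:
  assumes "2 \<le> t" "t \<le> T" "a \<in> gp_layer P t" "p \<in> pre P a"
    and "((a, t), True) \<in> up_lits (gp_cnf P T) S"
    and "b \<in> gp_layer P (t - 1)" "p \<in> add P b"
    and "\<And>b'. b' \<in> gp_layer P (t - 1) \<Longrightarrow> p \<in> add P b' \<Longrightarrow> b' \<noteq> b \<Longrightarrow>
           ((b', t - 1), False) \<in> up_lits (gp_cnf P T) S"
  shows "((b, t - 1), True) \<in> up_lits (gp_cnf P T) S"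
proof (rule up_lits_unitI)
  show "insert ((a, t), False) {((b, t - 1), True) | b. b \<in> gp_layer P (t - 1) \<and> p \<in> add P b}
          \<in> gp_cnf P T"
    using assms(1-4) unfolding gp_cnf_def by blast
qed (use assms(5-8) in \<open>force simp: neg_def\<close>)+

lemma gp_up_neg_by_mutex:
  assumes "1 \<le> t" "t \<le> T" "(a, b) \<in> gp_mutex P t" "((a, t), True) \<in> up_lits (gp_cnf P T) S"
  shows "((b, t), False) \<in> up_lits (gp_cnf P T) S"
proof (rule up_lits_unitI)
  show "{((a, t), False), ((b, t), False)} \<in> gp_cnf P T"
    using assms(1-3) unfolding gp_cnf_def by blast
qed (use assms(4) in \<open>auto simp: neg_def\<close>)

lemma gp_up_pos_by_goal:
  assumes "g \<in> goal P" "b \<in> gp_layer P T" "g \<in> add P b"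
    and "\<And>b'. b' \<in> gp_layer P T \<Longrightarrow> g \<in> add P b' \<Longrightarrow> b' \<noteq> b \<Longrightarrow>
           ((b', T), False) \<in> up_lits (gp_cnf P T) S"
  shows "((b, T), True) \<in> up_lits (gp_cnf P T) S"
proof (rule up_lits_unitI)
  show "{((a, T), True) | a. a \<in> gp_layer P T \<and> g \<in> add P a} \<in> gp_cnf P T"
    using assms(1) unfolding gp_cnf_def by blast
qed (use assms(2-4) in \<open>force simp: neg_def\<close>)+

lemma gp_up_conflict_by_goal:
  assumes "g \<in> goal P"
    and "\<And>b. b \<in> gp_layer P T \<Longrightarrow> g \<in> add P b \<Longrightarrow> ((b, T), False) \<in> up_lits (gp_cnf P T) S"
  shows "up_conflict (gp_cnf P T) S"
proof (rule up_conflictI)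
  show "{((a, T), True) | a. a \<in> gp_layer P T \<and> g \<in> add P a} \<in> gp_cnf P T"
    using assms(1) unfolding gp_cnf_def by blast
qed (use assms(2) in \<open>auto simp: neg_def\<close>)

section \<open>The planning graph of MAP\<close>

lemma map_task_simps [simp]:
  "pre (map_task n) = map_pre" "add (map_task n) = map_add" "del (map_task n) = map_del"
  "init (map_task n) = {At L0}"
  "goal (map_task n) = {Visited (Br 1 (2 * n - 3)), Visited (Br 2 1)}"
  by (simp_all add: map_task_def)

lemma map_acts_Move [simp]: "Move x y \<in> acts (map_task n) \<longleftrightarrow> (x, y) \<in> map_edges n"
  by (auto simp: map_task_def)

lemma map_acts_Noop [simp]: "Noop p \<in> acts (map_task n) \<longleftrightarrow> p \<in> map_facts n"
  by (auto simp: map_task_def)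

lemma map_edges_iff:
  "(x, y) \<in> map_edges n \<longleftrightarrow>
     (x = L0 \<and> y = Br 1 1) \<or> (y = L0 \<and> x = Br 1 1) \<or>
     (\<exists>k. 1 \<le> k \<and> k < 2 * n - 3 \<and>
        ((x = Br 1 k \<and> y = Br 1 (k + 1)) \<or> (y = Br 1 k \<and> x = Br 1 (k + 1)))) \<or>
     (\<exists>i. 2 \<le> i \<and> i \<le> n \<and> ((x = L0 \<and> y = Br i 1) \<or> (y = L0 \<and> x = Br i 1)))"
  unfolding map_edges_def map_edges0_def by blast

abbreviation map_layer :: "nat \<Rightarrow> nat \<Rightarrow> act set" where
  "map_layer n t \<equiv> gp_layer (map_task n) t"

abbreviation map_fact_layer :: "nat \<Rightarrow> nat \<Rightarrow> fact set" where
  "map_fact_layer n t \<equiv> gp_fact_layer (map_task n) t"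

abbreviation map_fact_mutex :: "nat \<Rightarrow> nat \<Rightarrow> (fact \<times> fact) set" where
  "map_fact_mutex n t \<equiv> gp_fact_mutex (map_task n) t"

lemma map_pre_singleton: "\<exists>p. map_pre a = {p}"
  by (cases a) auto

lemma map_layer_iff:
  "a \<in> map_layer n t \<longleftrightarrow> a \<in> acts (map_task n) \<and> map_pre a \<subseteq> map_fact_layer n (t - 1)"
  using map_pre_singleton[of a] by (auto simp: gp_layer_single_pre_iff)

fun node_dist :: "node \<Rightarrow> node \<Rightarrow> nat" where
  "node_dist L0 L0 = 0"
| "node_dist L0 (Br j l) = l"
| "node_dist (Br i k) L0 = k"
| "node_dist (Br i k) (Br j l) = (if i = j then (k - l) + (l - k) else k + l)"

lemma node_dist_map_edge_le: "(x, y) \<in> map_edges n \<Longrightarrow> node_dist z y \<le> node_dist z x + 1"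
  by (cases z) (auto simp: map_edges_iff)

fun fact_node :: "fact \<Rightarrow> node" where
  "fact_node (At x) = x"
| "fact_node (Visited x) = x"

lemma map_fact_layer_dist_le: "p \<in> map_fact_layer n t \<Longrightarrow> node_dist L0 (fact_node p) \<le> t"
proof (induction t arbitrary: p)
  case 0
  then show ?case by simp
next
  case (Suc t)
  then obtain a where a: "a \<in> map_layer n (Suc t)" "p \<in> map_add a"
    by (auto simp: gp_fact_layer_Suc_iff)
  show ?case
  proof (cases a)
    case (Move x y)
    with a have "(x, y) \<in> map_edges n" "At x \<in> map_fact_layer n t"
      by (auto simp: map_layer_iff)
    with Suc.IH[of "At x"] node_dist_map_edge_le[of x y n L0] a Move show ?thesis by auto
  next
    case (Noop q)
    with a Suc.IH[of p] show ?thesis by (auto simp: map_layer_iff)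
  qed
qed

lemma branch1_in_map_nodes: "k \<le> 2 * n - 3 \<Longrightarrow> branch1 k \<in> map_nodes n"
  by (auto simp: branch1_def map_nodes_def)

lemma branch1_in_map_edges: "Suc k \<le> 2 * n - 3 \<Longrightarrow> (branch1 k, branch1 (Suc k)) \<in> map_edges n"
  by (cases k) (force simp: map_edges_iff branch1_def)+

lemma node_dist_L0_branch1 [simp]: "node_dist L0 (branch1 k) = k"
  by (simp add: branch1_def)

lemma map_At_branch1_in_fact_layer:
  "k \<le> t \<Longrightarrow> k \<le> 2 * n - 3 \<Longrightarrow> At (branch1 k) \<in> map_fact_layer n t"
proof (induction t arbitrary: k)
  case 0
  then show ?case by (simp add: branch1_def)
next
  case (Suc t)
  show ?case
  proof (cases "k \<le> t")
    case True
    with Suc have "Noop (At (branch1 k)) \<in> map_layer n (Suc t)"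
      by (auto simp: map_layer_iff map_facts_def branch1_in_map_nodes)
    then show ?thesis
      by (force simp: gp_fact_layer_Suc_iff)
  next
    case False
    with Suc have "Move (branch1 t) (branch1 k) \<in> map_layer n (Suc t)"
      by (auto simp: map_layer_iff le_Suc_eq branch1_in_map_edges)
    then show ?thesis
      by (force simp: gp_fact_layer_Suc_iff)
  qed
qed

definition straight_move :: "nat \<Rightarrow> act" where
  "straight_move k = Move (branch1 (k - 1)) (branch1 k)"

lemma straight_move_in_layer:
  "1 \<le> k \<Longrightarrow> k \<le> t \<Longrightarrow> k \<le> 2 * n - 3 \<Longrightarrow> straight_move k \<in> map_layer n t"
  using map_At_branch1_in_fact_layer[of "k - 1" "t - 1" n] branch1_in_map_edges[of "k - 1" n]
  by (simp add: straight_move_def map_layer_iff)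

lemma straight_move_unique_supporter:
  assumes "1 \<le> t" "a \<in> map_layer n t" "q \<in> map_add a" "q \<in> {At (branch1 t), Visited (branch1 t)}"
  shows "a = straight_move t"
proof (cases a)
  case (Move x y)
  with assms have y: "y = Br 1 t" and edge: "(x, Br 1 t) \<in> map_edges n"
    and x_dist: "node_dist L0 x \<le> t - 1"
    using map_fact_layer_dist_le[of "At x" n "t - 1"]
    by (auto simp: map_layer_iff branch1_def)
  from edge x_dist assms(1) have "x = branch1 (t - 1)"
    by (auto simp: map_edges_iff branch1_def)
  with Move y assms(1) show ?thesis
    by (simp add: straight_move_def branch1_def)
next
  case (Noop p)
  with assms have "q \<in> map_fact_layer n (t - 1)"
    by (auto simp: map_layer_iff)
  from map_fact_layer_dist_le[OF this] assms show ?thesis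
    by auto
qed

lemma map_At_supporter_pre:
  assumes "a \<in> map_layer n t" "At y \<in> map_add a"
  obtains x where "map_pre a = {At x}" "\<And>z. node_dist z y \<le> node_dist z x + 1"
proof -
  obtain x where x: "map_pre a = {At x}" "x = y \<or> a = Move x y"
    using assms(2) by (cases a) auto
  have "node_dist z y \<le> node_dist z x + 1" for z
    using x(2)
  proof
    assume "a = Move x y"
    with assms(1) have "(x, y) \<in> map_edges n" by (simp add: map_layer_iff)
    then show ?thesis by (rule node_dist_map_edge_le)
  qed simp
  with x(1) show thesis by (rule that)
qed

lemma map_add_At_unique: "At x \<in> map_add a \<Longrightarrow> At y \<in> map_add a \<Longrightarrow> x = y"
  by (cases a) auto

lemma map_interfere_same_At_pre:
  "map_pre a = {At x} \<Longrightarrow> map_pre b = {At x} \<Longrightarrow> a \<noteq> b \<Longrightarrow> interfere (map_task n) a b"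
  by (cases a; cases b) (auto simp: interfere_def)

lemma map_mutex_At_pre_if_At_mutex:
  assumes At_mutex: "\<And>x y. At x \<in> map_fact_layer n (t - 1) \<Longrightarrow> At y \<in> map_fact_layer n (t - 1) \<Longrightarrow>
                       x \<noteq> y \<Longrightarrow> (At x, At y) \<in> map_fact_mutex n (t - 1)"
    and a: "a \<in> map_layer n t" "map_pre a = {At x}"
    and b: "b \<in> map_layer n t" "map_pre b = {At y}"
    and "a \<noteq> b"
  shows "(a, b) \<in> gp_mutex (map_task n) t"
proof (cases "x = y")
  case True
  with a b \<open>a \<noteq> b\<close> show ?thesis
    by (intro gp_mutexI_interfere map_interfere_same_At_pre) auto
next
  case False
  from a b have "At x \<in> map_fact_layer n (t - 1)" "At y \<in> map_fact_layer n (t - 1)"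
    by (auto simp: map_layer_iff)
  with False At_mutex a b \<open>a \<noteq> b\<close> show ?thesis
    by (intro gp_mutexI_competing[of a _ _ b "At x" "At y"]) auto
qed

lemma map_At_mutex:
  "At x \<in> map_fact_layer n t \<Longrightarrow> At y \<in> map_fact_layer n t \<Longrightarrow> x \<noteq> y \<Longrightarrow>
   (At x, At y) \<in> map_fact_mutex n t"
proof (induction t arbitrary: x y)
  case 0
  then show ?case by simp
next
  case (Suc t)
  have "(a, b) \<in> gp_mutex (map_task n) (Suc t)"
    if layers: "a \<in> map_layer n (Suc t)" "b \<in> map_layer n (Suc t)"
      and adds: "At x \<in> map_add a" "At y \<in> map_add b" for a b
  proof -
    obtain u v where "map_pre a = {At u}" "map_pre b = {At v}"
      using map_At_supporter_pre[OF layers(1) adds(1)] map_At_supporter_pre[OF layers(2) adds(2)]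
      by metis
    moreover from adds Suc.prems(3) have "a \<noteq> b"
      using map_add_At_unique by blast
    ultimately show ?thesis
      using layers Suc.IH by (intro map_mutex_At_pre_if_At_mutex) auto
  qed
  with Suc.prems show ?case
    by (auto simp: gp_fact_mutex_Suc_iff)
qed

lemma map_mutex_At_pre:
  "a \<in> map_layer n t \<Longrightarrow> b \<in> map_layer n t \<Longrightarrow> a \<noteq> b \<Longrightarrow>
   map_pre a = {At x} \<Longrightarrow> map_pre b = {At y} \<Longrightarrow> (a, b) \<in> gp_mutex (map_task n) t"
  by (rule map_mutex_At_pre_if_At_mutex) (auto intro: map_At_mutex)

lemma map_Visited_L2_supporter:
  "a \<in> acts (map_task n) \<Longrightarrow> Visited (Br 2 1) \<in> map_add a \<Longrightarrow>
   a = Move L0 (Br 2 1) \<or> a = Noop (Visited (Br 2 1))"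
  by (cases a) (auto simp: map_edges_iff)

lemma map_Visited_end_supporter:
  "a \<in> acts (map_task n) \<Longrightarrow> Visited (Br 1 (2 * n - 3)) \<in> map_add a \<Longrightarrow>
   a = Move (branch1 (2 * n - 4)) (Br 1 (2 * n - 3)) \<or> a = Noop (Visited (Br 1 (2 * n - 3)))"
  by (cases a) (auto simp: map_edges_iff branch1_def)

lemma map_move_L0_L2_in_layer: "2 \<le> n \<Longrightarrow> Move L0 (Br 2 1) \<in> map_layer n t"
  using map_At_branch1_in_fact_layer[of 0 "t - 1" n]
  by (auto simp: map_layer_iff map_edges_iff branch1_def)

lemma map_Visited_L2_in_fact_layer:
  "2 \<le> n \<Longrightarrow> 1 \<le> t \<Longrightarrow> Visited (Br 2 1) \<in> map_fact_layer n t"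
  using map_move_L0_L2_in_layer[of n t]
  by (cases t) (force simp: gp_fact_layer_Suc_iff)+

text \<open>Visiting L_2^1 takes a step, and getting from there to y takes
  \<open>node_dist (Br 2 1) y\<close> more.\<close>

lemma map_At_Visited_L2_mutex:
  assumes "2 \<le> n"
  shows "1 \<le> t \<Longrightarrow> t \<le> node_dist (Br 2 1) y \<Longrightarrow> At y \<in> map_fact_layer n t \<Longrightarrow>
         (At y, Visited (Br 2 1)) \<in> map_fact_mutex n t"
proof (induction t arbitrary: y)
  case 0
  then show ?case by simp
next
  case (Suc t)
  have "(a, b) \<in> gp_mutex (map_task n) (Suc t)"
    if a: "a \<in> map_layer n (Suc t)" "At y \<in> map_add a"
      and b: "b \<in> map_layer n (Suc t)" "Visited (Br 2 1) \<in> map_add b" for a b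
  proof -
    obtain x where pre_a: "map_pre a = {At x}"
      and step: "node_dist (Br 2 1) y \<le> node_dist (Br 2 1) x + 1"
      using map_At_supporter_pre[OF a] by metis
    from step Suc.prems(2) have x_dist: "t \<le> node_dist (Br 2 1) x"
      by linarith
    from b(1) have "b \<in> acts (map_task n)" by (simp add: map_layer_iff)
    with b(2) have "b = Move L0 (Br 2 1) \<or> b = Noop (Visited (Br 2 1))"
      by (intro map_Visited_L2_supporter)
    then show ?thesis
    proof
      assume b_move: "b = Move L0 (Br 2 1)"
      with a(2) Suc.prems(2) have "a \<noteq> b" by auto
      with a(1) b(1) pre_a b_move show ?thesis
        by (intro map_mutex_At_pre) auto
    next
      assume b_noop: "b = Noop (Visited (Br 2 1))"
      with b(1) have "Visited (Br 2 1) \<in> map_fact_layer n t"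
        by (simp add: map_layer_iff)
      then have "1 \<le> t"
        using map_fact_layer_dist_le by fastforce
      moreover from a(1) pre_a have "At x \<in> map_fact_layer n t"
        by (simp add: map_layer_iff)
      ultimately have "(At x, Visited (Br 2 1)) \<in> map_fact_mutex n t"
        using Suc.IH x_dist by blast
      moreover from pre_a b_noop have "a \<noteq> b" by (cases a) simp_all
      ultimately show ?thesis
        using a(1) b(1) pre_a b_noop
        by (intro gp_mutexI_competing[of a _ _ b "At x" "Visited (Br 2 1)"]) simp_all
    qed
  qed
  with Suc.prems map_Visited_L2_in_fact_layer[OF assms, of "Suc t"] show ?case
    unfolding gp_fact_mutex_Suc_iff by auto
qed

section \<open>Unit propagation on the MAP encoding\<close>

context
  fixes n :: nat and S :: "(act \<times> nat) lit set"
  assumes n_ge_2: "2 \<le> n"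
begin

lemmas map_up_neg_by_pre =
  gp_up_neg_by_pre[where P = "map_task n" and T = "2 * n - 2", folded map_cnf_def]
lemmas map_up_pos_by_pre =
  gp_up_pos_by_pre[where P = "map_task n" and T = "2 * n - 2", folded map_cnf_def]
lemmas map_up_neg_by_mutex =
  gp_up_neg_by_mutex[where P = "map_task n" and T = "2 * n - 2", folded map_cnf_def]
lemmas map_up_pos_by_goal =
  gp_up_pos_by_goal[where P = "map_task n" and T = "2 * n - 2", folded map_cnf_def]
lemmas map_up_conflict_by_goal =
  gp_up_conflict_by_goal[where P = "map_task n" and T = "2 * n - 2", folded map_cnf_def]

lemma map_up_conflict_if_Visited_L2_unsupported:
  assumes "((Move L0 (Br 2 1), 2 * n - 2), False) \<in> up_lits (map_cnf n) S"
    and "((Noop (Visited (Br 2 1)), 2 * n - 2), False) \<in> up_lits (map_cnf n) S"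
  shows "up_conflict (map_cnf n) S"
proof (rule map_up_conflict_by_goal)
  fix b assume "b \<in> map_layer n (2 * n - 2)" "Visited (Br 2 1) \<in> add (map_task n) b"
  then have "b = Move L0 (Br 2 1) \<or> b = Noop (Visited (Br 2 1))"
    by (intro map_Visited_L2_supporter[of b n]) (simp_all add: map_layer_iff)
  with assms show "((b, 2 * n - 2), False) \<in> up_lits (map_cnf n) S"
    by blast
qed simp

lemma map_up_straight_move_false_Suc:
  assumes "1 \<le> k" "Suc k \<le> 2 * n - 3" "((straight_move k, k), False) \<in> up_lits (map_cnf n) S"
  shows "((straight_move (Suc k), Suc k), False) \<in> up_lits (map_cnf n) S"
proof (rule map_up_neg_by_pre)
  show "straight_move (Suc k) \<in> map_layer n (Suc k)"
    using assms by (intro straight_move_in_layer) simp_all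
  show "At (branch1 k) \<in> pre (map_task n) (straight_move (Suc k))"
    by (simp add: straight_move_def)
  fix b assume "b \<in> map_layer n (Suc k - 1)" "At (branch1 k) \<in> add (map_task n) b"
  with assms(1) have "b = straight_move k"
    by (intro straight_move_unique_supporter[of k b n "At (branch1 k)"]) simp_all
  with assms(3) show "((b, Suc k - 1), False) \<in> up_lits (map_cnf n) S"
    by simp
qed (use assms in simp_all)

lemma map_up_straight_move_true_pred:
  assumes "1 \<le> k" "Suc k \<le> 2 * n - 3" "((straight_move (Suc k), Suc k), True) \<in> up_lits (map_cnf n) S"
  shows "((straight_move k, k), True) \<in> up_lits (map_cnf n) S"
proof -
  have "((straight_move k, Suc k - 1), True) \<in> up_lits (map_cnf n) S"
  proof (rule map_up_pos_by_pre)
    show "straight_move (Suc k) \<in> map_layer n (Suc k)"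
      using assms by (intro straight_move_in_layer) simp_all
    show "At (branch1 k) \<in> pre (map_task n) (straight_move (Suc k))"
      by (simp add: straight_move_def)
    show "straight_move k \<in> map_layer n (Suc k - 1)"
      using assms by (intro straight_move_in_layer) simp_all
    show "At (branch1 k) \<in> add (map_task n) (straight_move k)"
      by (simp add: straight_move_def)
    fix b assume "b \<in> map_layer n (Suc k - 1)" "At (branch1 k) \<in> add (map_task n) b"
      "b \<noteq> straight_move k"
    with assms(1) show "((b, Suc k - 1), False) \<in> up_lits (map_cnf n) S"
      using straight_move_unique_supporter[of k b n "At (branch1 k)"] by simp
  qed (use assms in simp_all)
  then show ?thesis by simp
qed

lemma map_straight_move_last:
  "straight_move (2 * n - 3) = Move (branch1 (2 * n - 4)) (Br 1 (2 * n - 3))"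
  using n_ge_2 by (simp add: straight_move_def branch1_def numeral_eq_Suc)

lemma map_up_last_move_true:
  assumes "((straight_move (2 * n - 3), 2 * n - 3), False) \<in> up_lits (map_cnf n) S"
  shows "((straight_move (2 * n - 3), 2 * n - 2), True) \<in> up_lits (map_cnf n) S"
proof (rule map_up_pos_by_goal)
  show "straight_move (2 * n - 3) \<in> map_layer n (2 * n - 2)"
    using n_ge_2 by (intro straight_move_in_layer) simp_all
  show "Visited (Br 1 (2 * n - 3)) \<in> add (map_task n) (straight_move (2 * n - 3))"
    by (simp add: map_straight_move_last)
  fix b assume b: "b \<in> map_layer n (2 * n - 2)" "Visited (Br 1 (2 * n - 3)) \<in> add (map_task n) b"
    "b \<noteq> straight_move (2 * n - 3)"
  then have b_noop: "b = Noop (Visited (Br 1 (2 * n - 3)))"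
    using map_Visited_end_supporter[of b n] by (auto simp: map_layer_iff map_straight_move_last)
  show "((b, 2 * n - 2), False) \<in> up_lits (map_cnf n) S"
  proof (rule map_up_neg_by_pre)
    show "Visited (Br 1 (2 * n - 3)) \<in> pre (map_task n) b"
      using b_noop by simp
    fix c assume "c \<in> map_layer n (2 * n - 2 - 1)" "Visited (Br 1 (2 * n - 3)) \<in> add (map_task n) c"
    with n_ge_2 have "c = straight_move (2 * n - 3)"
      by (intro straight_move_unique_supporter[of _ c n "Visited (Br 1 (2 * n - 3))"])
        (simp_all add: branch1_def numeral_eq_Suc)
    with assms show "((c, 2 * n - 2 - 1), False) \<in> up_lits (map_cnf n) S"
      by (simp add: numeral_eq_Suc)
  qed (use n_ge_2 b in simp_all)
qed simp

lemma map_up_conflict_if_last_move_true: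
  assumes last_move: "((straight_move (2 * n - 3), 2 * n - 2), True) \<in> up_lits (map_cnf n) S"
  shows "up_conflict (map_cnf n) S"
proof (rule map_up_conflict_if_Visited_L2_unsupported)
  have last_move_layer: "straight_move (2 * n - 3) \<in> map_layer n (2 * n - 2)"
    using n_ge_2 by (intro straight_move_in_layer) simp_all
  show "((Move L0 (Br 2 1), 2 * n - 2), False) \<in> up_lits (map_cnf n) S"
  proof (rule map_up_neg_by_mutex[OF _ _ _ last_move])
    show "(straight_move (2 * n - 3), Move L0 (Br 2 1)) \<in> gp_mutex (map_task n) (2 * n - 2)"
      using last_move_layer map_move_L0_L2_in_layer[OF n_ge_2]
      by (intro map_mutex_At_pre) (simp_all add: map_straight_move_last)
  qed (use n_ge_2 in simp_all)
  show "((Noop (Visited (Br 2 1)), 2 * n - 2), False) \<in> up_lits (map_cnf n) S"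
  proof (rule map_up_neg_by_mutex[OF _ _ _ last_move])
    have "2 * n - 2 - 1 = 2 * n - 3" by simp
    have "At (branch1 (2 * n - 4)) \<in> map_fact_layer n (2 * n - 3)"
      by (rule map_At_branch1_in_fact_layer) simp_all
    moreover have "2 * n - 3 \<le> node_dist (Br 2 1) (branch1 (2 * n - 4))"
      using n_ge_2 by (auto simp: branch1_def)
    ultimately have "(At (branch1 (2 * n - 4)), Visited (Br 2 1)) \<in> map_fact_mutex n (2 * n - 3)"
      using n_ge_2 by (intro map_At_Visited_L2_mutex) simp_all
    moreover have "Noop (Visited (Br 2 1)) \<in> map_layer n (2 * n - 2)"
      using n_ge_2 map_Visited_L2_in_fact_layer[of n "2 * n - 3"]
      by (simp add: map_layer_iff map_facts_def map_nodes_def)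
    ultimately show "(straight_move (2 * n - 3), Noop (Visited (Br 2 1))) \<in> gp_mutex (map_task n) (2 * n - 2)"
      using last_move_layer \<open>2 * n - 2 - 1 = 2 * n - 3\<close>
      by (intro gp_mutexI_competing[where p = "At (branch1 (2 * n - 4))" and q = "Visited (Br 2 1)"])
        (simp_all add: map_straight_move_last)
  qed (use n_ge_2 in simp_all)
qed

lemma map_up_conflict_if_straight_move_false:
  assumes s: "1 \<le> s" "s \<le> 2 * n - 3"
    and cut: "((straight_move s, s), False) \<in> up_lits (map_cnf n) S"
  shows "up_conflict (map_cnf n) S"
proof -
  from s(2) have "((straight_move (2 * n - 3), 2 * n - 3), False) \<in> up_lits (map_cnf n) S"
  proof (induction rule: dec_induct)
    case base
    show ?case by (rule cut)
  next
    case (step k)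
    with s(1) show ?case by (intro map_up_straight_move_false_Suc) simp_all
  qed
  then show ?thesis
    by (intro map_up_conflict_if_last_move_true map_up_last_move_true)
qed

context
  fixes s :: nat
  assumes s_pos: "1 \<le> s" and s_le: "s \<le> 2 * n - 3"
    and at_s: "((straight_move s, s), True) \<in> up_lits (map_cnf n) S"
begin

lemma map_up_straight_walk_true:
  assumes "1 \<le> t" "t \<le> s"
  shows "((straight_move t, t), True) \<in> up_lits (map_cnf n) S"
  using assms(2)
proof (induction rule: inc_induct)
  case base
  show ?case by (rule at_s)
next
  case (step k)
  with assms(1) s_le show ?case by (intro map_up_straight_move_true_pred[of k]) simp_all
qed

lemma map_up_far_At_false:
  assumes "s + d \<le> 2 * n - 2" "a \<in> map_layer n (s + d)" "At y \<in> map_add a"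
    and "d < node_dist (branch1 s) y"
  shows "((a, s + d), False) \<in> up_lits (map_cnf n) S"
  using assms
proof (induction d arbitrary: a y)
  case 0
  obtain x where pre_a: "map_pre a = {At x}"
    using map_At_supporter_pre[OF "0.prems"(2,3)] by metis
  have "y \<noteq> branch1 s"
    using "0.prems"(4) by (auto simp: branch1_def)
  moreover have "a = straight_move s \<Longrightarrow> y = branch1 s"
    using "0.prems"(3) by (simp add: straight_move_def)
  ultimately have "a \<noteq> straight_move s"
    by blast
  then have "(straight_move s, a) \<in> gp_mutex (map_task n) s"
    using s_pos s_le "0.prems"(2) pre_a
    by (intro map_mutex_At_pre[where x = "branch1 (s - 1)" and y = x] straight_move_in_layer)
      (simp_all add: straight_move_def)
  with s_pos s_le at_s have "((a, s), False) \<in> up_lits (map_cnf n) S"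
    by (intro map_up_neg_by_mutex[of s]) simp_all
  then show ?case by simp
next
  case (Suc d)
  obtain x where pre_a: "map_pre a = {At x}"
    and step: "node_dist (branch1 s) y \<le> node_dist (branch1 s) x + 1"
    using map_At_supporter_pre[OF Suc.prems(2,3)] by metis
  from step Suc.prems(4) have x_far: "d < node_dist (branch1 s) x"
    by linarith
  have "((a, s + Suc d), False) \<in> up_lits (map_cnf n) S"
  proof (rule map_up_neg_by_pre)
    show "At x \<in> pre (map_task n) a"
      using pre_a by simp
    fix b assume "b \<in> map_layer n (s + Suc d - 1)" "At x \<in> add (map_task n) b"
    with Suc.IH[of b x] Suc.prems(1) x_far show "((b, s + Suc d - 1), False) \<in> up_lits (map_cnf n) S"
      by simp
  qed (use s_pos Suc.prems in simp_all)
  then show ?case by simp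
qed

lemma map_up_Move_L0_L2_false:
  assumes "2 * n - 2 \<le> 2 * s" "1 \<le> t" "t \<le> 2 * n - 2"
  shows "((Move L0 (Br 2 1), t), False) \<in> up_lits (map_cnf n) S"
proof (cases "t \<le> s")
  case True
  have "(straight_move t, Move L0 (Br 2 1)) \<in> gp_mutex (map_task n) t"
    using assms(2) True s_le map_move_L0_L2_in_layer[OF n_ge_2]
    by (intro map_mutex_At_pre[where x = "branch1 (t - 1)" and y = L0] straight_move_in_layer)
      (simp_all add: straight_move_def branch1_def)
  with assms True map_up_straight_walk_true[of t] show ?thesis
    by (intro map_up_neg_by_mutex[of t]) simp_all
next
  case False
  show ?thesis
  proof (rule map_up_neg_by_pre)
    show "Move L0 (Br 2 1) \<in> map_layer n t"
      by (rule map_move_L0_L2_in_layer[OF n_ge_2])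
    show "At L0 \<in> pre (map_task n) (Move L0 (Br 2 1))"
      by simp
    fix b assume b: "b \<in> map_layer n (t - 1)" "At L0 \<in> add (map_task n) b"
    obtain d where d: "t - 1 = s + d" "d < node_dist (branch1 s) L0"
      using False assms(1,3) s_pos by (intro that[of "t - 1 - s"]) (auto simp: branch1_def)
    with b assms(3) show "((b, t - 1), False) \<in> up_lits (map_cnf n) S"
      using map_up_far_At_false[of d b L0] by simp
  qed (use False s_pos assms in simp_all)
qed

lemma map_up_Noop_Visited_L2_false:
  assumes "2 * n - 2 \<le> 2 * s"
  shows "t \<le> 2 * n - 2 \<Longrightarrow> Noop (Visited (Br 2 1)) \<in> map_layer n t \<Longrightarrow>
         ((Noop (Visited (Br 2 1)), t), False) \<in> up_lits (map_cnf n) S"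
proof (induction t)
  case 0
  then show ?case by (simp add: map_layer_iff)
next
  case (Suc t)
  then have "1 \<le> t"
    by (cases t) (simp_all add: map_layer_iff)
  show ?case
  proof (rule map_up_neg_by_pre)
    show "Visited (Br 2 1) \<in> pre (map_task n) (Noop (Visited (Br 2 1)))"
      by simp
    fix b assume b: "b \<in> map_layer n (Suc t - 1)" "Visited (Br 2 1) \<in> add (map_task n) b"
    then have "b = Move L0 (Br 2 1) \<or> b = Noop (Visited (Br 2 1))"
      by (intro map_Visited_L2_supporter[of b n]) (simp_all add: map_layer_iff)
    then show "((b, Suc t - 1), False) \<in> up_lits (map_cnf n) S"
    proof
      assume "b = Move L0 (Br 2 1)"
      with \<open>1 \<le> t\<close> Suc.prems(1) show ?thesis
        using map_up_Move_L0_L2_false[OF assms, of t] by simp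
    next
      assume "b = Noop (Visited (Br 2 1))"
      with b(1) Suc.prems(1) show ?thesis
        using Suc.IH by simp
    qed
  qed (use \<open>1 \<le> t\<close> Suc.prems in simp_all)
qed

lemma map_up_conflict_if_straight_move_true:
  assumes "2 * n - 2 \<le> 2 * s"
  shows "up_conflict (map_cnf n) S"
proof (rule map_up_conflict_if_Visited_L2_unsupported)
  show "((Move L0 (Br 2 1), 2 * n - 2), False) \<in> up_lits (map_cnf n) S"
    using n_ge_2 by (intro map_up_Move_L0_L2_false[OF assms]) simp_all
  have "Noop (Visited (Br 2 1)) \<in> map_layer n (2 * n - 2)"
    using n_ge_2 map_Visited_L2_in_fact_layer[of n "2 * n - 3"]
    by (simp add: map_layer_iff map_facts_def map_nodes_def)
  then show "((Noop (Visited (Br 2 1)), 2 * n - 2), False) \<in> up_lits (map_cnf n) S"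
    by (intro map_up_Noop_Visited_L2_false[OF assms]) simp_all
qed

end

end

lemma mapB_eq_straight_moves:
  "mapB n = {(straight_move (2 ^ j - 1), 2 ^ j - 1) | j. 1 \<le> j \<and> j \<le> nat \<lceil>log 2 (real n)\<rceil>}"
  unfolding mapB_def straight_move_def by (simp only: diff_diff_left one_add_one)

lemma ceiling_log2_bounds:
  assumes "2 \<le> n"
  obtains j where "nat \<lceil>log 2 (real n)\<rceil> = Suc j" "2 ^ j < n" "n \<le> 2 ^ Suc j"
proof -
  from assms have "1 \<le> log 2 (real n)"
    by simp
  then obtain j where j: "\<lceil>log 2 (real n)\<rceil> = int j + 1"
    by (intro that[of "nat (\<lceil>log 2 (real n)\<rceil> - 1)"]) linarith
  with assms have "2 ^ j < n \<and> n \<le> 2 ^ Suc j"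
    using ceiling_log_nat_eq_powr_iff[of 2 n j] by simp
  with j show thesis
    by (intro that[of j]) simp_all
qed

theorem theorem9:
  fixes n :: nat
  assumes "n \<ge> 2"
  shows "backdoor (map_cnf n) (mapB n)"
  unfolding backdoor_def
proof
  fix \<alpha> :: "act \<times> nat \<Rightarrow> bool"
  obtain j where j: "nat \<lceil>log 2 (real n)\<rceil> = Suc j" "2 ^ j < n" "n \<le> 2 ^ Suc j"
    using ceiling_log2_bounds[OF assms] .
  define s :: nat where "s = 2 ^ Suc j - 1"
  have s: "1 \<le> s" "s \<le> 2 * n - 3" "2 * n - 2 \<le> 2 * s"
    using j(2,3) by (simp_all add: s_def)
  have "(straight_move s, s) \<in> mapB n"
    unfolding mapB_eq_straight_moves s_def using j(1) by force
  then have "((straight_move s, s), \<alpha> (straight_move s, s)) \<in> up_lits (map_cnf n) {(v, \<alpha> v) | v. v \<in> mapB n}"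
    by (intro up_lits.base) blast
  with assms s show "up_conflict (map_cnf n) {(v, \<alpha> v) | v. v \<in> mapB n}"
    using map_up_conflict_if_straight_move_true map_up_conflict_if_straight_move_false
    by (cases "\<alpha> (straight_move s, s)") simp_all
qed

end
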